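(* Let $\mathcal P$ be a polycyclic presentation on $g_1,\ldots,g_n$ with $r_1=\infty$, assume the subpresentation $\mathcal P^{[2]}$ is consistent, and assume there is an endomorphism $\sigma$ of $H^{[2]}$ with $\sigma(g_j)=g^{a_{1,j}}$ for $2\le j\le n$. If $c(g_jg_1^{-1}g_1)=c(g_j)$ holds for all $j>1$, then $\sigma$ is an automorphism of $H^{[2]}$ and the map $g_j\mapsto g^{b_{1,j}}$ ($2\le j\le n$) induces the automorphism $\sigma^{-1}$ of $H^{[2]}$.
   Context: A polycyclic presentation $\mathcal P$ on generators $g_1,\ldots,g_n$ consists of $r_1,\ldots,r_n\in\mathbb N\cup\{\infty\}$ and integers $e_{i,k},a_{i,j,k},b_{i,j,k}$ ($1\le i<j\le n$, $1\le k\le n$) with $0\le e_{i,k},a_{i,j,k},b_{i,j,k}<r_k$ whenever $r_k<\infty$, and has defining relations $g_i^{r_i}=g^{e_i}$ (for $r_i<\infty$), $g_jg_i=g_ig^{a_{i,j}}$ (for $i<j$), $g_jg_i^{-1}=g_i^{-1}g^{b_{i,j}}$ (for $i<j$, $r_i=\infty$), where $g^{e_i}=g_{i+1}^{e_{i,i+1}}\cdots g_n^{e_{i,n}}$, $g^{a_{i,j}}=g_{i+1}^{a_{i,j,i+1}}\cdots g_n^{a_{i,j,n}}$, $g^{b_{i,j}}=g_{i+1}^{b_{i,j,i+1}}\cdots g_n^{b_{i,j,n}}$ (with $g_k^x$ for $x<0$ meaning $(g_k^{-1})^{|x|}$). From the presentation one computes integers $c_{i,j,k},d_{i,j,k},f_{i,k}$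 (in $[0,r_k)$ when $r_k<\infty$) such that in the presented group $g_j^{-1}g_i=g_ig^{c_{i,j}}$ ($i<j$, $r_j=\infty$), $g_j^{-1}g_i^{-1}=g_i^{-1}g^{d_{i,j}}$ ($i<j$, $r_i=r_j=\infty$), $g_i^{-1}=g_i^{r_i-1}g^{f_i}$ ($r_i<\infty$). Let $M$ be the free monoid on $\{g_1^{\pm1},\ldots,g_n^{\pm1}\}$. A collection step replaces a subword equal to the left-hand side of one of these six kinds of relations by its right-hand side, or deletes $g_ig_i^{-1}$ or $g_i^{-1}g_i$; a word admitting no step is reduced (of the form $g_1^{x_1}\cdots g_n^{x_n}$ with $0\le x_i<r_i$ if $r_i<\infty$). The collection-to-the-left algorithm applies steps, always choosing the leftmost occurrence of a non-reduced subword involving a generator of smallest index (lower index has priority), until the word is reduced; $c\colon M\to M$ maps a word to the result. $\mathcal P^{[2]}$ is the presentation on $g_2,\ldots,g_n$ consisting of those relations above with $i\ge2$; $H^{[2]}$ is the group it defines. $\mathcal P^{[2]}$ is consistent if every element of $H^{[2]}$ is represented by exactly one reduced word in $g_2,\ldots,g_n$. *)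

theory Defs
  imports "HOL-Algebra.Group"
begin

(* Letters of the free monoid M on g_1^{+-1},...,g_n^{+-1}:
   (k, True) stands for g_k and (k, False) for g_k^{-1}. *)
type_synonym letter = "nat \<times> bool"
type_synonym word = "letter list"

(* The data of a polycyclic presentation P.
   rel_order k = None means r_k = infinity, Some m means r_k = m.
   ex i k = e_{i,k},  ca i j k = a_{i,j,k},  cb i j k = b_{i,j,k}. *)
record pcp =
  ngen :: nat
  rel_order :: "nat \<Rightarrow> nat option"
  ex :: "nat \<Rightarrow> nat \<Rightarrow> int"
  ca :: "nat \<Rightarrow> nat \<Rightarrow> nat \<Rightarrow> int"
  cb :: "nat \<Rightarrow> nat \<Rightarrow> nat \<Rightarrow> int"

(* The derived integers: cc i j k = c_{i,j,k}, cd i j k = d_{i,j,k}, cf i k = f_{i,k}. *)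
record pcp_aux =
  cc :: "nat \<Rightarrow> nat \<Rightarrow> nat \<Rightarrow> int"
  cd :: "nat \<Rightarrow> nat \<Rightarrow> nat \<Rightarrow> int"
  cf :: "nat \<Rightarrow> nat \<Rightarrow> int"

definition gpow :: "nat \<Rightarrow> int \<Rightarrow> word" where
  "gpow k x = replicate (nat \<bar>x\<bar>) (k, 0 \<le> x)"

definition gvec :: "pcp \<Rightarrow> nat \<Rightarrow> (nat \<Rightarrow> int) \<Rightarrow> word" where
  "gvec P i v = concat (map (\<lambda>k. gpow k (v k)) [Suc i..<Suc (ngen P)])"

definition inv_word :: "word \<Rightarrow> word" where
  "inv_word w = rev (map (\<lambda>(k, s). (k, \<not> s)) w)"

definition in_range :: "pcp \<Rightarrow> nat \<Rightarrow> int \<Rightarrow> bool" where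
  "in_range P k x = (case rel_order P k of None \<Rightarrow> True | Some m \<Rightarrow> 0 \<le> x \<and> x < int m)"

definition pcp_wf :: "pcp \<Rightarrow> bool" where
  "pcp_wf P \<longleftrightarrow>
     (\<forall>i k. 1 \<le> i \<and> i < k \<and> k \<le> ngen P \<longrightarrow> in_range P k (ex P i k)) \<and>
     (\<forall>i j k. 1 \<le> i \<and> i < j \<and> j \<le> ngen P \<and> i < k \<and> k \<le> ngen P \<longrightarrow>
        in_range P k (ca P i j k) \<and> in_range P k (cb P i j k))"

definition words_over :: "pcp \<Rightarrow> nat \<Rightarrow> word set" where
  "words_over P s = {w. \<forall>x\<in>set w. s \<le> fst x \<and> fst x \<le> ngen P}"

(* Defining relations (lhs, rhs) of the subpresentation P^[s] (those with i >= s) *)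
inductive pres_rel :: "pcp \<Rightarrow> nat \<Rightarrow> word \<Rightarrow> word \<Rightarrow> bool" for P s where
  power: "s \<le> i \<Longrightarrow> i \<le> ngen P \<Longrightarrow> rel_order P i = Some m \<Longrightarrow>
          pres_rel P s (replicate m (i, True)) (gvec P i (ex P i))"
| conj: "s \<le> i \<Longrightarrow> i < j \<Longrightarrow> j \<le> ngen P \<Longrightarrow>
          pres_rel P s [(j, True), (i, True)] ((i, True) # gvec P i (ca P i j))"
| conj_inv: "s \<le> i \<Longrightarrow> i < j \<Longrightarrow> j \<le> ngen P \<Longrightarrow> rel_order P i = None \<Longrightarrow>
          pres_rel P s [(j, True), (i, False)] ((i, False) # gvec P i (cb P i j))"

(* The congruence on words over g_s..g_n defining the group H^[s]
   (free cancellation plus the defining relations of P^[s]) *)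
inductive peq :: "pcp \<Rightarrow> nat \<Rightarrow> word \<Rightarrow> word \<Rightarrow> bool" for P s where
  refl: "w \<in> words_over P s \<Longrightarrow> peq P s w w"
| sym: "peq P s u v \<Longrightarrow> peq P s v u"
| trans: "peq P s u v \<Longrightarrow> peq P s v w \<Longrightarrow> peq P s u w"
| rel: "pres_rel P s l r \<Longrightarrow> u \<in> words_over P s \<Longrightarrow> v \<in> words_over P s \<Longrightarrow>
        peq P s (u @ l @ v) (u @ r @ v)"
| free: "s \<le> i \<Longrightarrow> i \<le> ngen P \<Longrightarrow> u \<in> words_over P s \<Longrightarrow> v \<in> words_over P s \<Longrightarrow>
        peq P s (u @ [(i, b), (i, \<not> b)] @ v) (u @ v)"

definition cls :: "pcp \<Rightarrow> nat \<Rightarrow> word \<Rightarrow> word set" where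
  "cls P s w = {v. peq P s w v}"

(* The group H^[s] defined by P^[s], as a quotient of the free monoid *)
definition Hgrp :: "pcp \<Rightarrow> nat \<Rightarrow> word set monoid" where
  "Hgrp P s = \<lparr> carrier = cls P s ` words_over P s,
                mult = (\<lambda>X Y. {w. \<exists>x\<in>X. \<exists>y\<in>Y. peq P s (x @ y) w}),
                one = cls P s [] \<rparr>"

definition reduced_word :: "pcp \<Rightarrow> nat \<Rightarrow> word \<Rightarrow> bool" where
  "reduced_word P s w \<longleftrightarrow>
     (\<exists>x. w = gvec P (s - 1) x \<and> (\<forall>k. s \<le> k \<and> k \<le> ngen P \<longrightarrow> in_range P k (x k)))"

definition consistent :: "pcp \<Rightarrow> nat \<Rightarrow> bool" where
  "consistent P s \<longleftrightarrow> (\<forall>X \<in> carrier (Hgrp P s). \<exists>!w. w \<in> X \<and> reduced_word P s w)"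

(* The derived integers c, d, f: bounds, and the identities they are computed from,
   valid in H^[i+1]:  g^{c_{i,j}} = (g^{a_{i,j}})^{-1},  g^{d_{i,j}} = (g^{b_{i,j}})^{-1},
   g^{f_i} = (g^{e_i})^{-1}.  (These yield g_j^{-1} g_i = g_i g^{c_{i,j}},
   g_j^{-1} g_i^{-1} = g_i^{-1} g^{d_{i,j}}, g_i^{-1} = g_i^{r_i - 1} g^{f_i}.) *)
definition aux_ok :: "pcp \<Rightarrow> pcp_aux \<Rightarrow> bool" where
  "aux_ok P C \<longleftrightarrow>
     (\<forall>i j. 1 \<le> i \<and> i < j \<and> j \<le> ngen P \<and> rel_order P j = None \<longrightarrow>
        (\<forall>k. i < k \<and> k \<le> ngen P \<longrightarrow> in_range P k (cc C i j k)) \<and>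
        peq P (Suc i) (gvec P i (cc C i j)) (inv_word (gvec P i (ca P i j)))) \<and>
     (\<forall>i j. 1 \<le> i \<and> i < j \<and> j \<le> ngen P \<and> rel_order P i = None \<and> rel_order P j = None \<longrightarrow>
        (\<forall>k. i < k \<and> k \<le> ngen P \<longrightarrow> in_range P k (cd C i j k)) \<and>
        peq P (Suc i) (gvec P i (cd C i j)) (inv_word (gvec P i (cb P i j)))) \<and>
     (\<forall>i. 1 \<le> i \<and> i \<le> ngen P \<and> rel_order P i \<noteq> None \<longrightarrow>
        (\<forall>k. i < k \<and> k \<le> ngen P \<longrightarrow> in_range P k (cf C i k)) \<and>
        peq P (Suc i) (gvec P i (cf C i)) (inv_word (gvec P i (ex P i))))"

(* Collection rules lhs -> rhs of the full presentation P.  The nat i is the index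
   of the generator of smallest index involved; rank 0 marks free cancellations,
   rank 1 the six kinds of relations. *)
inductive coll_rule :: "pcp \<Rightarrow> pcp_aux \<Rightarrow> nat \<Rightarrow> nat \<Rightarrow> word \<Rightarrow> word \<Rightarrow> bool" for P C where
  power: "1 \<le> i \<Longrightarrow> i \<le> ngen P \<Longrightarrow> rel_order P i = Some m \<Longrightarrow> 0 < m \<Longrightarrow>
          coll_rule P C i 1 (replicate m (i, True)) (gvec P i (ex P i))"
| conj_a: "1 \<le> i \<Longrightarrow> i < j \<Longrightarrow> j \<le> ngen P \<Longrightarrow>
          coll_rule P C i 1 [(j, True), (i, True)] ((i, True) # gvec P i (ca P i j))"
| conj_b: "1 \<le> i \<Longrightarrow> i < j \<Longrightarrow> j \<le> ngen P \<Longrightarrow> rel_order P i = None \<Longrightarrow>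
          coll_rule P C i 1 [(j, True), (i, False)] ((i, False) # gvec P i (cb P i j))"
| conj_c: "1 \<le> i \<Longrightarrow> i < j \<Longrightarrow> j \<le> ngen P \<Longrightarrow> rel_order P j = None \<Longrightarrow>
          coll_rule P C i 1 [(j, False), (i, True)] ((i, True) # gvec P i (cc C i j))"
| conj_d: "1 \<le> i \<Longrightarrow> i < j \<Longrightarrow> j \<le> ngen P \<Longrightarrow> rel_order P i = None \<Longrightarrow>
          rel_order P j = None \<Longrightarrow>
          coll_rule P C i 1 [(j, False), (i, False)] ((i, False) # gvec P i (cd C i j))"
| inverse: "1 \<le> i \<Longrightarrow> i \<le> ngen P \<Longrightarrow> rel_order P i = Some m \<Longrightarrow>
          coll_rule P C i 1 [(i, False)] (replicate (m - 1) (i, True) @ gvec P i (cf C i))"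
| free: "1 \<le> i \<Longrightarrow> i \<le> ngen P \<Longrightarrow> coll_rule P C i 0 [(i, b), (i, \<not> b)] []"

definition coll_occ :: "pcp \<Rightarrow> pcp_aux \<Rightarrow> word \<Rightarrow> nat \<Rightarrow> nat \<Rightarrow> nat \<Rightarrow> word \<Rightarrow> word \<Rightarrow> bool" where
  "coll_occ P C w i k p l r \<longleftrightarrow>
     coll_rule P C i k l r \<and> p + length l \<le> length w \<and> take (length l) (drop p w) = l"

(* One step of collection to the left: apply the occurrence whose smallest generator
   index is least; among those the leftmost; ties at the same position are broken in
   favour of free cancellation. *)
definition coll_step :: "pcp \<Rightarrow> pcp_aux \<Rightarrow> word \<Rightarrow> word \<Rightarrow> bool" where
  "coll_step P C w w' \<longleftrightarrow>
     (\<exists>i k p l r. coll_occ P C w i k p l r \<and>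
        w' = take p w @ r @ drop (p + length l) w \<and>
        (\<forall>i' k' p' l' r'. coll_occ P C w i' k' p' l' r' \<longrightarrow>
           i < i' \<or> (i = i' \<and> (p < p' \<or> (p = p' \<and> k \<le> k')))))"

definition coll_result :: "pcp \<Rightarrow> pcp_aux \<Rightarrow> word \<Rightarrow> word \<Rightarrow> bool" where
  "coll_result P C w v \<longleftrightarrow> (coll_step P C)\<^sup>*\<^sup>* w v \<and> \<not> (\<exists>v'. coll_step P C v v')"

end

theory Submission
  imports Defs "HOL-Algebra.Elementary_Groups"
begin

(* Collecting g_j g_1^-1 g_1 first rewrites g_j g_1^-1 to g_1^-1 g^(b_1j); then g_1 travels to the
   left through g^(b_1j), replacing each letter x by a word for g_1^-1 x g_1 = sigma x, and finally
   cancels against g_1^-1.  Collection steps preserve the element of H^[2], so the hypothesis on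
   c(g_j g_1^-1 g_1) says that sigma maps g^(b_1j) to g_j, and sigma is surjective.  The series
   H^[2] = <g_2,...,g_n> > <g_3,...,g_n> > ... has cyclic factors, so H^[2] satisfies the ascending
   chain condition on subgroups; for such a group the kernels of the iterates of a surjective
   endomorphism stabilise, which forces the endomorphism to be injective.  Hence sigma is an
   automorphism and its inverse maps g_j to g^(b_1j). *)

section \<open>Ascending chain condition on subgroups\<close>

definition acc_subgroups :: "('a, 'b) monoid_scheme \<Rightarrow> 'a set \<Rightarrow> bool" where
  "acc_subgroups G S \<longleftrightarrow>
     (\<forall>U :: nat \<Rightarrow> 'a set. (\<forall>i. subgroup (U i) G \<and> U i \<subseteq> S \<and> U i \<subseteq> U (Suc i))
        \<longrightarrow> (\<exists>m. \<forall>i\<ge>m. U i = U m))"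

lemma acc_subgroupsI:
  fixes G :: "('a, 'b) monoid_scheme"
  assumes "\<And>U :: nat \<Rightarrow> 'a set. (\<And>i. subgroup (U i) G) \<Longrightarrow> (\<And>i. U i \<subseteq> S) \<Longrightarrow> (\<And>i j. i \<le> j \<Longrightarrow> U i \<subseteq> U j)
             \<Longrightarrow> \<exists>m. \<forall>i\<ge>m. U i = U m"
  shows "acc_subgroups G S"
  unfolding acc_subgroups_def
proof (intro allI impI)
  fix U :: "nat \<Rightarrow> _ set"
  assume "\<forall>i. subgroup (U i) G \<and> U i \<subseteq> S \<and> U i \<subseteq> U (Suc i)"
  then show "\<exists>m. \<forall>i\<ge>m. U i = U m"
    using assms[of U] lift_Suc_mono_le[of U] by blast
qed

lemma acc_subgroupsE:
  assumes "acc_subgroups G S" "\<And>i. subgroup (U i) G" "\<And>i. U i \<subseteq> S" "\<And>i. U i \<subseteq> U (Suc i)"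
  obtains m where "\<And>i. m \<le> i \<Longrightarrow> U i = U m"
  using assms unfolding acc_subgroups_def by blast

lemma acc_subgroups_one: "group G \<Longrightarrow> acc_subgroups G {\<one>\<^bsub>G\<^esub>}"
  by (rule acc_subgroupsI) (metis subgroup.one_closed subset_singletonD empty_iff)

lemma subgroup_integer_groupI:
  assumes "0 \<in> E" and "\<And>x y. x \<in> E \<Longrightarrow> y \<in> E \<Longrightarrow> x - y \<in> E"
  shows "subgroup E integer_group"
proof (rule group.subgroupI[OF group_integer_group])
  show "E \<noteq> {}" using assms(1) by blast
  fix x y assume "x \<in> E" "y \<in> E"
  then show "inv\<^bsub>integer_group\<^esub> x \<in> E" and "x \<otimes>\<^bsub>integer_group\<^esub> y \<in> E"
    using assms(2)[OF assms(1)] assms(2)[of x "- y"] by auto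
qed simp

lemma subgroup_integer_group_multiples:
  assumes E: "subgroup E integer_group"
  shows "\<exists>d. E = {x. d dvd x}"
proof (cases "E \<subseteq> {0}")
  case True
  then show ?thesis using subgroup.one_closed[OF E] by (intro exI[of _ 0]) auto
next
  case False
  have mult: "k * x \<in> E" if "x \<in> E" for k x
    using group.subgroup_int_pow_closed[OF group_integer_group E that] by simp
  have pos: "\<exists>n::nat. 0 < n \<and> int n \<in> E"
  proof -
    obtain x where x: "x \<in> E" "x \<noteq> 0" using False by blast
    have "\<bar>x\<bar> \<in> E" using mult[OF x(1), of "sgn x"] by (simp add: abs_sgn mult.commute)
    then show ?thesis using x(2) by (intro exI[of _ "nat \<bar>x\<bar>"]) simp
  qed
  define d where "d = (LEAST n::nat. 0 < n \<and> int n \<in> E)"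
  have d: "0 < d" "int d \<in> E" using LeastI_ex[OF pos] unfolding d_def by blast+
  have "int d dvd x" if "x \<in> E" for x
  proof -
    have "x - (x div int d) * int d \<in> E"
      using subgroup.m_closed[OF E that mult[OF d(2), of "- (x div int d)"]] by simp
    then have "int (nat (x mod int d)) \<in> E" using d(1) by (simp add: minus_div_mult_eq_mod)
    moreover have "x mod int d < int d" using d(1) by simp
    ultimately have "\<not> 0 < nat (x mod int d)"
      using Least_le[of "\<lambda>n. 0 < n \<and> int n \<in> E" "nat (x mod int d)"] unfolding d_def[symmetric]
      by fastforce
    moreover have "0 \<le> x mod int d" using d(1) by simp
    ultimately show ?thesis by (simp add: dvd_eq_mod_eq_0)
  qed
  then show ?thesis using mult[OF d(2)] by (intro exI[of _ "int d"]) (auto simp: dvd_def mult.commute)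
qed

lemma acc_subgroups_integer_group: "acc_subgroups integer_group UNIV"
proof (rule acc_subgroupsI)
  fix E :: "nat \<Rightarrow> int set"
  assume E: "\<And>i. subgroup (E i) integer_group" and mono: "\<And>i j. i \<le> j \<Longrightarrow> E i \<subseteq> E j"
  have "subgroup (\<Union>i. E i) integer_group"
  proof (rule subgroup_integer_groupI)
    show "0 \<in> (\<Union>i. E i)" using subgroup.one_closed[OF E] by auto
    fix x y assume "x \<in> (\<Union>i. E i)" "y \<in> (\<Union>i. E i)"
    then obtain i j where "x \<in> E i" "y \<in> E j" by blast
    then have "x \<in> E (max i j)" "y \<in> E (max i j)"
      using mono[of i "max i j"] mono[of j "max i j"] by auto
    then have "x + - y \<in> E (max i j)"
      using subgroup.m_closed[OF E] subgroup.m_inv_closed[OF E] by fastforce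
    then show "x - y \<in> (\<Union>i. E i)" by auto
  qed
  then obtain d where union: "(\<Union>i. E i) = {x. d dvd x}"
    using subgroup_integer_group_multiples by blast
  moreover have "d \<in> {x. d dvd x}" by simp
  ultimately obtain m where "d \<in> E m" by blast
  then have "E i = {x. d dvd x}" if "m \<le> i" for i
    using union mono[OF that] group.subgroup_int_pow_closed[OF group_integer_group E]
    by (fastforce simp: dvd_def mult.commute)
  then show "\<exists>m. \<forall>i\<ge>m. E i = E m" by (metis order_refl)
qed

lemma (in group) inv_m_cancel [simp]:
  "x \<in> carrier G \<Longrightarrow> y \<in> carrier G \<Longrightarrow> inv x \<otimes> (x \<otimes> y) = y"
  by (simp add: m_assoc[symmetric])

lemma (in group) m_inv_cancel [simp]:
  "x \<in> carrier G \<Longrightarrow> y \<in> carrier G \<Longrightarrow> x \<otimes> (inv x \<otimes> y) = y"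
  by (simp add: m_assoc[symmetric])

lemma (in group) subgroup_eqI_Int_set_mult:
  assumes U: "subgroup U G" and V: "subgroup V G" and N: "N \<subseteq> carrier G" and UV: "U \<subseteq> V"
    and Int: "V \<inter> N \<subseteq> U" and prod: "V \<subseteq> U <#> N"
  shows "U = V"
proof
  show "V \<subseteq> U"
  proof
    fix v assume v: "v \<in> V"
    then obtain u n where u: "u \<in> U" and n: "n \<in> N" and vun: "v = u \<otimes> n"
      using prod unfolding set_mult_def by blast
    have uc: "u \<in> carrier G" and vc: "v \<in> carrier G" and nc: "n \<in> carrier G"
      using subgroup.mem_carrier[OF U u] subgroup.mem_carrier[OF V v] n N by auto
    have "inv u \<in> V" using UV u subgroup.m_inv_closed[OF V] by blast
    then have "inv u \<otimes> v \<in> V" using subgroup.m_closed[OF V _ v] by blast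
    moreover have "inv u \<otimes> v = n" using inv_solve_left'[OF nc uc vc] vun by blast
    ultimately have "inv u \<otimes> v \<in> U" using Int n by blast
    then have "u \<otimes> (inv u \<otimes> v) \<in> U" using subgroup.m_closed[OF U u] by blast
    then show "v \<in> U" using uc vc by (simp add: m_assoc[symmetric])
  qed
qed (rule UV)

lemma (in group) conj_nat_pow_closed:
  assumes N: "subgroup N G" and a: "a \<in> carrier G"
    and conj: "\<And>n. n \<in> N \<Longrightarrow> a \<otimes> n \<otimes> inv a \<in> N"
  shows "n \<in> N \<Longrightarrow> a [^] (k::nat) \<otimes> n \<otimes> inv (a [^] k) \<in> N"
proof (induct k arbitrary: n)
  case 0 then show ?case using subgroup.mem_carrier[OF N] by simp
next
  case (Suc k)
  have "a [^] Suc k \<otimes> n \<otimes> inv (a [^] Suc k) = a [^] k \<otimes> (a \<otimes> n \<otimes> inv a) \<otimes> inv (a [^] k)"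
    using a subgroup.mem_carrier[OF N Suc(2)]
    by (simp only: nat_pow_Suc inv_mult_group m_assoc nat_pow_closed inv_closed m_closed)
  then show ?case using Suc conj by simp
qed

lemma (in group) conj_int_pow_closed:
  assumes N: "subgroup N G" and a: "a \<in> carrier G"
    and conj: "\<And>n. n \<in> N \<Longrightarrow> a \<otimes> n \<otimes> inv a \<in> N"
    and conj_inv: "\<And>n. n \<in> N \<Longrightarrow> inv a \<otimes> n \<otimes> a \<in> N"
    and n: "n \<in> N"
  shows "a [^] (k::int) \<otimes> n \<otimes> inv (a [^] k) \<in> N"
proof (cases "k < 0")
  case True
  have "a [^] k = inv a [^] nat (- k)"
    using True by (simp only: int_pow_def2 if_True nat_pow_inv[OF a])
  moreover have "inv a \<otimes> n \<otimes> inv (inv a) \<in> N" if "n \<in> N" for n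
    using conj_inv[OF that] a by simp
  ultimately show ?thesis using conj_nat_pow_closed[OF N inv_closed[OF a] _ n] by simp
next
  case False
  then have "a [^] k = a [^] nat k" by (simp only: int_pow_def2 if_False)
  then show ?thesis using conj_nat_pow_closed[OF N a conj n] by simp
qed

lemma (in group) subgroup_integer_group_exponents:
  assumes U: "subgroup U G" and N: "subgroup N G" and g: "g \<in> carrier G"
    and normal: "\<And>z n. n \<in> N \<Longrightarrow> g [^] (z::int) \<otimes> n \<otimes> inv (g [^] z) \<in> N"
  shows "subgroup {z::int. \<exists>n\<in>N. g [^] z \<otimes> n \<in> U} integer_group"
proof (rule subgroup_integer_groupI)
  show "0 \<in> {z::int. \<exists>n\<in>N. g [^] z \<otimes> n \<in> U}"
    using subgroup.one_closed[OF U] subgroup.one_closed[OF N] by force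
next
  fix x y assume "x \<in> {z::int. \<exists>n\<in>N. g [^] z \<otimes> n \<in> U}" "y \<in> {z::int. \<exists>n\<in>N. g [^] z \<otimes> n \<in> U}"
  then obtain n1 n2 where n: "n1 \<in> N" "n2 \<in> N" and u: "g [^] x \<otimes> n1 \<in> U" "g [^] y \<otimes> n2 \<in> U"
    by blast
  have nc: "n1 \<in> carrier G" "n2 \<in> carrier G" using n subgroup.mem_carrier[OF N] by auto
  define n' where "n' = g [^] y \<otimes> (n1 \<otimes> inv n2) \<otimes> inv (g [^] y)"
  have "n' \<in> N" unfolding n'_def
    using n by (intro normal) (simp add: subgroup.m_closed[OF N] subgroup.m_inv_closed[OF N])
  moreover have "(g [^] x \<otimes> n1) \<otimes> inv (g [^] y \<otimes> n2) = g [^] (x - y) \<otimes> n'"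
    unfolding n'_def using nc g by (simp add: int_pow_diff inv_mult_group m_assoc)
  moreover have "(g [^] x \<otimes> n1) \<otimes> inv (g [^] y \<otimes> n2) \<in> U"
    using u by (simp add: subgroup.m_closed[OF U] subgroup.m_inv_closed[OF U])
  ultimately show "x - y \<in> {z::int. \<exists>n\<in>N. g [^] z \<otimes> n \<in> U}" by auto
qed

lemma (in group) acc_subgroups_cyclic_extension:
  assumes N: "subgroup N G" and g: "g \<in> carrier G"
    and decomp: "\<And>x. x \<in> K \<Longrightarrow> \<exists>z::int. \<exists>n\<in>N. x = g [^] z \<otimes> n"
    and normal: "\<And>z n. n \<in> N \<Longrightarrow> g [^] (z::int) \<otimes> n \<otimes> inv (g [^] z) \<in> N"
    and acc: "acc_subgroups G N"
  shows "acc_subgroups G K"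
proof (rule acc_subgroupsI)
  fix U :: "nat \<Rightarrow> 'a set" assume U: "\<And>i. subgroup (U i) G" and UK: "\<And>i. U i \<subseteq> K"
    and mono: "\<And>i j. i \<le> j \<Longrightarrow> U i \<subseteq> U j"
  have Nc: "N \<subseteq> carrier G" using subgroup.subset[OF N] .
  obtain m1 where m1: "\<And>i. m1 \<le> i \<Longrightarrow> U i \<inter> N = U m1 \<inter> N"
  proof (rule acc_subgroupsE[OF acc])
    show "subgroup (U i \<inter> N) G" for i by (rule subgroups_Inter_pair[OF U N])
    show "U i \<inter> N \<subseteq> U (Suc i) \<inter> N" for i :: nat using mono[of i "Suc i"] by auto
  qed (auto intro: that)
  define E where "E i = {z::int. \<exists>n\<in>N. g [^] z \<otimes> n \<in> U i}" for i
  have E: "subgroup (E i) integer_group" for i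
    unfolding E_def using U N g normal by (rule subgroup_integer_group_exponents)
  obtain m2 where m2: "\<And>i. m2 \<le> i \<Longrightarrow> E i = E m2"
  proof (rule acc_subgroupsE[OF acc_subgroups_integer_group E])
    show "E i \<subseteq> E (Suc i)" for i :: nat using mono[of i "Suc i"] by (auto simp: E_def)
  qed (auto intro: that)
  define m where "m = max m1 m2"
  have "U m = U i" if "m \<le> i" for i
  proof (rule subgroup_eqI_Int_set_mult[OF U U Nc mono])
    show "m \<le> i" using that .
    have "U i \<inter> N = U m \<inter> N" using m1[of i] m1[of m] that by (simp add: m_def)
    then show "U i \<inter> N \<subseteq> U m" by blast
    show "U i \<subseteq> U m <#> N"
    proof
      fix v assume v: "v \<in> U i"
      then obtain z n where n: "n \<in> N" and vzn: "v = g [^] (z::int) \<otimes> n"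
        using decomp UK by blast
      have "z \<in> E m" using m2[of i] m2[of m] that v n vzn by (auto simp: m_def E_def)
      then obtain n' where n': "n' \<in> N" and u: "g [^] z \<otimes> n' \<in> U m"
        unfolding E_def by blast
      have "v = (g [^] z \<otimes> n') \<otimes> (inv n' \<otimes> n)"
        using vzn g subsetD[OF Nc n] subsetD[OF Nc n'] by (simp add: m_assoc)
      moreover have "inv n' \<otimes> n \<in> N"
        using n n' by (simp add: subgroup.m_closed[OF N] subgroup.m_inv_closed[OF N])
      ultimately show "v \<in> U m <#> N" using u unfolding set_mult_def by blast
    qed
  qed
  then show "\<exists>m. \<forall>i\<ge>m. U i = U m" by metis
qed

lemma (in group) surj_endomorphism_inj_if_acc_subgroups:
  assumes f: "f \<in> hom G G" and surj: "f ` carrier G = carrier G"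
    and acc: "acc_subgroups G (carrier G)"
  shows "inj_on f (carrier G)"
proof -
  have hom: "f ^^ n \<in> hom G G" for n
    by (induct n) (use f in \<open>auto simp: hom_def Pi_iff\<close>)
  have onto: "(f ^^ n) ` carrier G = carrier G" for n
  proof (induct n)
    case (Suc n)
    have "(f ^^ Suc n) ` carrier G = f ` ((f ^^ n) ` carrier G)" by (simp add: image_image)
    then show ?case using Suc surj by simp
  qed simp
  have gh: "group_hom G G (f ^^ n)" for n
    using hom by (simp add: group_hom_def group_hom_axioms_def)
  have gh1: "group_hom G G f" using gh[of 1] by simp
  obtain m where m: "\<And>i. m \<le> i \<Longrightarrow> kernel G G (f ^^ i) = kernel G G (f ^^ m)"
  proof (rule acc_subgroupsE[OF acc])
    show "subgroup (kernel G G (f ^^ n)) G" for n by (rule group_hom.subgroup_kernel[OF gh])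
    show "kernel G G (f ^^ n) \<subseteq> kernel G G (f ^^ Suc n)" for n :: nat
      using group_hom.hom_one[OF gh1] by (auto simp: kernel_def)
  qed (auto simp: kernel_def intro: that)
  have "kernel G G f = {\<one>}"
  proof (intro equalityI subsetI)
    fix x assume x: "x \<in> kernel G G f"
    then obtain y where y: "y \<in> carrier G" "x = (f ^^ m) y"
      using onto[of m] by (auto simp: kernel_def)
    then have "y \<in> kernel G G (f ^^ Suc m)" using x by (simp add: kernel_def)
    then have "y \<in> kernel G G (f ^^ m)" using m[of "Suc m"] by simp
    then show "x \<in> {\<one>}" using y by (simp add: kernel_def)
  qed (simp add: kernel_def group_hom.hom_one[OF gh1])
  then show ?thesis using group_hom.trivial_ker_imp_inj[OF gh1] by simp
qed

lemma (in group) inv_conj_eq: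
  assumes "x \<in> carrier G" "y \<in> carrier G" "a \<in> carrier G" "x \<otimes> y = y \<otimes> a"
  shows "inv x \<otimes> y = y \<otimes> inv a"
proof -
  have "inv x \<otimes> (x \<otimes> y) \<otimes> inv a = inv x \<otimes> (y \<otimes> a) \<otimes> inv a" using assms(4) by simp
  then show ?thesis using assms(1-3) by (simp add: m_assoc)
qed

section \<open>The group defined by a subpresentation\<close>

lemma words_over_Nil [simp]: "[] \<in> words_over P s"
  by (simp add: words_over_def)

lemma words_over_Cons [simp]:
  "x # w \<in> words_over P s \<longleftrightarrow> s \<le> fst x \<and> fst x \<le> ngen P \<and> w \<in> words_over P s"
  by (auto simp: words_over_def)

lemma words_over_append [simp]:
  "u @ w \<in> words_over P s \<longleftrightarrow> u \<in> words_over P s \<and> w \<in> words_over P s"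
  by (auto simp: words_over_def)

lemma words_over_antimono: "w \<in> words_over P s' \<Longrightarrow> s \<le> s' \<Longrightarrow> w \<in> words_over P s"
  by (auto simp: words_over_def)

lemma inv_word_words_over [simp]: "inv_word w \<in> words_over P s \<longleftrightarrow> w \<in> words_over P s"
  by (auto simp: inv_word_def words_over_def)

lemma gvec_letter: "x \<in> set (gvec P i v) \<Longrightarrow> Suc i \<le> fst x \<and> fst x \<le> ngen P"
  by (auto simp: gvec_def gpow_def)

lemma gvec_words_over: "gvec P i v \<in> words_over P (Suc i)"
  by (auto simp: words_over_def dest: gvec_letter)

lemma gvec_words_over_2: "1 \<le> i \<Longrightarrow> gvec P i v \<in> words_over P 2"
  using words_over_antimono[OF gvec_words_over] by simp

lemma pres_rel_words_over: "pres_rel P s l r \<Longrightarrow> l \<in> words_over P s \<and> r \<in> words_over P s"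
  by (induct rule: pres_rel.induct)
     (auto simp: words_over_def dest!: gvec_letter)

lemma peq_words_over: "peq P s u v \<Longrightarrow> u \<in> words_over P s \<and> v \<in> words_over P s"
  by (induct rule: peq.induct) (auto dest: pres_rel_words_over)

lemma pres_rel_antimono: "pres_rel P s' l r \<Longrightarrow> s \<le> s' \<Longrightarrow> pres_rel P s l r"
  by (induct rule: pres_rel.induct) (auto intro: pres_rel.intros)

lemma peq_antimono: "peq P s' u v \<Longrightarrow> s \<le> s' \<Longrightarrow> peq P s u v"
proof (induct rule: peq.induct)
  case (refl w)
  then show ?case by (auto intro: peq.refl words_over_antimono)
next
  case (sym u v)
  then have "peq P s u v" by simp
  then show ?case by (rule peq.sym)
next
  case (trans u v w)
  then show ?case by (meson peq.trans)
next
  case (rel l r u v)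
  then show ?case
    using peq.rel[OF pres_rel_antimono words_over_antimono words_over_antimono] by blast
next
  case (free i u v b)
  then show ?case using peq.free[of s i P u v b] words_over_antimono by auto
qed

lemma peq_append_left: "peq P s u v \<Longrightarrow> x \<in> words_over P s \<Longrightarrow> peq P s (x @ u) (x @ v)"
proof (induct rule: peq.induct)
  case (refl w)
  then show ?case by (simp add: peq.refl)
next
  case (sym u v)
  then have "peq P s (x @ u) (x @ v)" by simp
  then show ?case by (rule peq.sym)
next
  case (trans u v w)
  then show ?case by (meson peq.trans)
next
  case (rel l r u v)
  then show ?case using peq.rel[of P s l r "x @ u" v] by simp
next
  case (free i u v b)
  then show ?case using peq.free[of s i P "x @ u" v b] by simp
qed

lemma peq_append_right: "peq P s u v \<Longrightarrow> x \<in> words_over P s \<Longrightarrow> peq P s (u @ x) (v @ x)"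
proof (induct rule: peq.induct)
  case (refl w)
  then show ?case by (simp add: peq.refl)
next
  case (sym u v)
  then have "peq P s (u @ x) (v @ x)" by simp
  then show ?case by (rule peq.sym)
next
  case (trans u v w)
  then show ?case by (meson peq.trans)
next
  case (rel l r u v)
  then show ?case using peq.rel[of P s l r u "v @ x"] by simp
next
  case (free i u v b)
  then show ?case using peq.free[of s i P u "v @ x" b] by simp
qed

lemma peq_append: "peq P s u u' \<Longrightarrow> peq P s v v' \<Longrightarrow> peq P s (u @ v) (u' @ v')"
  using peq.trans[OF peq_append_right peq_append_left] peq_words_over by blast

lemma peq_inv_word_append: "w \<in> words_over P s \<Longrightarrow> peq P s (inv_word w @ w) []"
proof (induct w)
  case Nil
  then show ?case by (simp add: inv_word_def peq.refl)
next
  case (Cons x w)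
  obtain i b where x: "x = (i, b)" by (cases x)
  have "peq P s (inv_word w @ [(i, \<not> b), (i, \<not> \<not> b)] @ w) (inv_word w @ w)"
    using Cons by (intro peq.free) (auto simp: x)
  then show ?case using Cons by (auto simp: inv_word_def x intro: peq.trans)
qed

lemma cls_eqI:
  assumes "peq P s u v" shows "cls P s u = cls P s v"
proof -
  have "peq P s u w \<longleftrightarrow> peq P s v w" for w
    using peq.trans[OF assms] peq.trans[OF peq.sym[OF assms]] by blast
  then show ?thesis by (simp add: cls_def)
qed

lemma carrier_Hgrp: "carrier (Hgrp P s) = cls P s ` words_over P s"
  by (simp add: Hgrp_def)

lemma one_Hgrp: "\<one>\<^bsub>Hgrp P s\<^esub> = cls P s []"
  by (simp add: Hgrp_def)

lemma cls_append:
  "u \<in> words_over P s \<Longrightarrow> v \<in> words_over P s \<Longrightarrow>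
     cls P s u \<otimes>\<^bsub>Hgrp P s\<^esub> cls P s v = cls P s (u @ v)"
proof -
  assume "u \<in> words_over P s" "v \<in> words_over P s"
  then have "u \<in> cls P s u" "v \<in> cls P s v" by (simp_all add: cls_def peq.refl)
  moreover have "peq P s (u @ v) w" if "x \<in> cls P s u" "y \<in> cls P s v" "peq P s (x @ y) w" for x y w
    using that peq.trans[OF peq_append] by (simp add: cls_def)
  ultimately show ?thesis by (auto simp: Hgrp_def cls_def)
qed

lemma cls_in_carrier: "w \<in> words_over P s \<Longrightarrow> cls P s w \<in> carrier (Hgrp P s)"
  by (simp add: carrier_Hgrp)

lemma group_Hgrp: "group (Hgrp P s)"
proof (rule groupI)
  fix x y assume "x \<in> carrier (Hgrp P s)" "y \<in> carrier (Hgrp P s)"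
  then show "x \<otimes>\<^bsub>Hgrp P s\<^esub> y \<in> carrier (Hgrp P s)"
    by (auto simp: carrier_Hgrp cls_append)
next
  show "\<one>\<^bsub>Hgrp P s\<^esub> \<in> carrier (Hgrp P s)" by (auto simp: carrier_Hgrp one_Hgrp)
next
  fix x y z assume "x \<in> carrier (Hgrp P s)" "y \<in> carrier (Hgrp P s)" "z \<in> carrier (Hgrp P s)"
  then show "x \<otimes>\<^bsub>Hgrp P s\<^esub> y \<otimes>\<^bsub>Hgrp P s\<^esub> z = x \<otimes>\<^bsub>Hgrp P s\<^esub> (y \<otimes>\<^bsub>Hgrp P s\<^esub> z)"
    by (auto simp: carrier_Hgrp cls_append)
next
  fix x assume "x \<in> carrier (Hgrp P s)"
  then show "\<one>\<^bsub>Hgrp P s\<^esub> \<otimes>\<^bsub>Hgrp P s\<^esub> x = x"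
    by (auto simp: carrier_Hgrp cls_append one_Hgrp)
next
  fix x assume "x \<in> carrier (Hgrp P s)"
  then obtain w where w: "w \<in> words_over P s" "x = cls P s w" by (auto simp: carrier_Hgrp)
  then show "\<exists>y\<in>carrier (Hgrp P s). y \<otimes>\<^bsub>Hgrp P s\<^esub> x = \<one>\<^bsub>Hgrp P s\<^esub>"
  proof (intro bexI[of _ "cls P s (inv_word w)"])
    show "cls P s (inv_word w) \<in> carrier (Hgrp P s)" using w by (simp add: carrier_Hgrp)
    have "cls P s (inv_word w) \<otimes>\<^bsub>Hgrp P s\<^esub> cls P s w = cls P s (inv_word w @ w)"
      using w by (simp add: cls_append)
    also have "\<dots> = cls P s []" using w by (intro cls_eqI peq_inv_word_append)
    finally show "cls P s (inv_word w) \<otimes>\<^bsub>Hgrp P s\<^esub> x = \<one>\<^bsub>Hgrp P s\<^esub>"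
      using w by (simp add: one_Hgrp)
  qed
qed

lemma cls_inv_word:
  assumes "w \<in> words_over P s"
  shows "inv\<^bsub>Hgrp P s\<^esub> (cls P s w) = cls P s (inv_word w)"
proof (rule group.inv_equality[OF group_Hgrp])
  show "cls P s (inv_word w) \<otimes>\<^bsub>Hgrp P s\<^esub> cls P s w = \<one>\<^bsub>Hgrp P s\<^esub>"
    using assms cls_eqI[OF peq_inv_word_append] by (simp add: cls_append one_Hgrp)
qed (simp_all add: assms cls_in_carrier)

lemma cls_Cons:
  "x # w \<in> words_over P s \<Longrightarrow> cls P s (x # w) = cls P s [x] \<otimes>\<^bsub>Hgrp P s\<^esub> cls P s w"
  using cls_append[of "[x]" P s w] by simp

lemma cls_inv_letter:
  "s \<le> j \<Longrightarrow> j \<le> ngen P \<Longrightarrow> cls P s [(j, False)] = inv\<^bsub>Hgrp P s\<^esub> (cls P s [(j, True)])"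
  using cls_inv_word[of "[(j, True)]" P s] by (simp add: inv_word_def)

lemma cls_replicate:
  assumes "s \<le> k" "k \<le> ngen P"
  shows "cls P s (replicate m (k, True)) = cls P s [(k, True)] [^]\<^bsub>Hgrp P s\<^esub> m"
proof (induct m)
  case 0
  then show ?case by (simp add: one_Hgrp)
next
  case (Suc m)
  have "cls P s (replicate (Suc m) (k, True)) = cls P s (replicate m (k, True) @ [(k, True)])"
    by (simp add: replicate_append_same)
  also have "\<dots> = cls P s (replicate m (k, True)) \<otimes>\<^bsub>Hgrp P s\<^esub> cls P s [(k, True)]"
    using assms by (simp add: cls_append words_over_def)
  finally show ?case using Suc by simp
qed

lemma pres_rel_cls_eq: "pres_rel P s l r \<Longrightarrow> cls P s l = cls P s r"
  using peq.rel[of P s l r "[]" "[]"] by (simp add: cls_eqI)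

section \<open>Collection to the left\<close>

lemma coll_rule_shape:
  assumes "coll_rule P C i k l r"
  shows "1 \<le> i \<and> i \<le> ngen P \<and> (\<exists>b. (i, b) \<in> set l) \<and> l \<noteq> [] \<and> r \<in> words_over P i"
  using assms
  by (cases rule: coll_rule.cases) (auto simp: words_over_def dest: gvec_letter)

lemma coll_occ_split:
  assumes "coll_occ P C w i k p l r"
  shows "w = take p w @ l @ drop (p + length l) w"
proof -
  have "w = take p w @ drop p w" by simp
  also have "drop p w = take (length l) (drop p w) @ drop (length l) (drop p w)"
    by (rule append_take_drop_id[symmetric])
  also have "take (length l) (drop p w) = l" using assms by (simp add: coll_occ_def)
  finally show ?thesis by (simp add: add.commute)
qed

lemma take_eq_imp_nth_eq: "take (length l) x = l \<Longrightarrow> q < length l \<Longrightarrow> x ! q = l ! q"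
  by (metis nth_take)

lemma coll_rule_unique:
  assumes "coll_rule P C i k l r" "coll_rule P C i k l' r'" "l ! 0 = l' ! 0"
    "length l \<ge> 2 \<Longrightarrow> length l' \<ge> 2 \<Longrightarrow> l ! 1 = l' ! 1"
  shows "l = l' \<and> r = r'"
  using assms by (elim coll_rule.cases) auto

lemma coll_step_deterministic:
  assumes s1: "coll_step P C w w1" and s2: "coll_step P C w w2"
  shows "w1 = w2"
proof -
  obtain i k p l r where o1: "coll_occ P C w i k p l r" and w1: "w1 = take p w @ r @ drop (p + length l) w"
    and m1: "\<forall>i' k' p' l' r'. coll_occ P C w i' k' p' l' r' \<longrightarrow> i < i' \<or> (i = i' \<and> (p < p' \<or> (p = p' \<and> k \<le> k')))"
    using s1 unfolding coll_step_def by blast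
  obtain i' k' p' l' r' where o2: "coll_occ P C w i' k' p' l' r'" and w2: "w2 = take p' w @ r' @ drop (p' + length l') w"
    and m2: "\<forall>i k p l r. coll_occ P C w i k p l r \<longrightarrow> i' < i \<or> (i' = i \<and> (p' < p \<or> (p' = p \<and> k' \<le> k)))"
    using s2 unfolding coll_step_def by blast
  have a: "i < i' \<or> (i = i' \<and> (p < p' \<or> (p = p' \<and> k \<le> k')))" using m1 o2 by blast
  have b: "i' < i \<or> (i' = i \<and> (p' < p \<or> (p' = p \<and> k' \<le> k)))" using m2 o1 by blast
  have eq: "i = i'" "p = p'" "k = k'" using a b by linarith+
  have r1: "coll_rule P C i k l r" and t1: "take (length l) (drop p w) = l"
    using o1 by (simp_all add: coll_occ_def)
  have r2: "coll_rule P C i k l' r'" and t2: "take (length l') (drop p w) = l'"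
    using o2 eq by (simp_all add: coll_occ_def)
  have ne: "l \<noteq> []" "l' \<noteq> []" using coll_rule_shape[OF r1] coll_rule_shape[OF r2] by blast+
  have "l ! 0 = drop p w ! 0" using take_eq_imp_nth_eq[OF t1] ne by simp
  moreover have "l' ! 0 = drop p w ! 0" using take_eq_imp_nth_eq[OF t2] ne by simp
  ultimately have f: "l ! 0 = l' ! 0" by simp
  have s: "l ! 1 = l' ! 1" if "length l \<ge> 2" "length l' \<ge> 2"
  proof -
    have "l ! 1 = drop p w ! 1" using take_eq_imp_nth_eq[OF t1] that by simp
    moreover have "l' ! 1 = drop p w ! 1" using take_eq_imp_nth_eq[OF t2] that by simp
    ultimately show ?thesis by simp
  qed
  have "l = l' \<and> r = r'" by (rule coll_rule_unique[OF r1 r2 f s])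
  then show ?thesis using w1 w2 eq by simp
qed

lemma coll_result_step:
  assumes "coll_result P C w v" "coll_step P C w w'"
  shows "coll_result P C w' v"
proof -
  have rt: "(coll_step P C)\<^sup>*\<^sup>* w v" and nv: "\<not> (\<exists>v'. coll_step P C v v')"
    using assms(1) by (simp_all add: coll_result_def)
  from rt show ?thesis
  proof (cases rule: converse_rtranclpE)
    case base then show ?thesis using nv assms(2) by blast
  next
    case (step y)
    have "y = w'" using coll_step_deterministic[OF step(1) assms(2)] .
    then show ?thesis using step(2) nv by (simp add: coll_result_def)
  qed
qed

lemma coll_rule_index_1:
  assumes "coll_rule P C 1 k l r" "rel_order P 1 = None"
  shows "(k = 1 \<and> (\<exists>j b b'. 1 < j \<and> l = [(j, b), (1, b')])) \<or> (k = 0 \<and> (\<exists>b. l = [(1, b), (1, \<not> b)]))"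
  using assms(1)
proof (cases rule: coll_rule.cases)
  case (power m) then show ?thesis using assms(2) by simp
next
  case (inverse m) then show ?thesis using assms(2) by simp
qed blast+

lemma coll_occ_index_1:
  assumes o: "coll_occ P C W 1 k p l r" and n1: "rel_order P 1 = None"
  shows "Suc p < length W \<and> fst (W ! Suc p) = 1 \<and> (k = 1 \<or> (k = 0 \<and> fst (W ! p) = 1))"
proof -
  have rl: "coll_rule P C 1 k l r" and t: "take (length l) (drop p W) = l" and len: "p + length l \<le> length W"
    using o by (simp_all add: coll_occ_def)
  from coll_rule_index_1[OF rl n1] show ?thesis
  proof
    assume "k = 1 \<and> (\<exists>j b b'. 1 < j \<and> l = [(j, b), (1, b')])"
    then obtain j b b' where l: "k = 1" "l = [(j, b), (1, b')]" by blast
    have "drop p W ! 1 = l ! 1" using take_eq_imp_nth_eq[OF t] l by simp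
    moreover have "Suc p < length W" using len l by simp
    ultimately show ?thesis using l by simp
  next
    assume "k = 0 \<and> (\<exists>b. l = [(1, b), (1, \<not> b)])"
    then obtain b where l: "k = 0" "l = [(1, b), (1, \<not> b)]" by blast
    have "drop p W ! 1 = l ! 1" "drop p W ! 0 = l ! 0" using take_eq_imp_nth_eq[OF t] l by simp_all
    moreover have "Suc p < length W" using len l by simp
    ultimately show ?thesis using l by simp
  qed
qed

lemma coll_occ_index_pos: "coll_occ P C W i k p l r \<Longrightarrow> 1 \<le> i"
  using coll_rule_shape by (auto simp: coll_occ_def)

lemma index_1_positions:
  assumes u: "u \<in> words_over P 2" and rest: "rest \<in> words_over P 2" and x: "fst x = 1" and y: "fst y = 1"
    and q: "q < length (x # u @ y # rest)" and f: "fst ((x # u @ y # rest) ! q) = 1"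
  shows "q = 0 \<or> q = Suc (length u)"
proof (rule ccontr)
  assume "\<not> (q = 0 \<or> q = Suc (length u))"
  then obtain q' where q': "q = Suc q'" "q' \<noteq> length u" by (cases q) auto
  show False
  proof (cases "q' < length u")
    case True
    then have "(x # u @ y # rest) ! q = u ! q'" using q' by (simp add: nth_append)
    moreover have "u ! q' \<in> set u" using True by simp
    ultimately show False using u f by (auto simp: words_over_def)
  next
    case False
    then have gt: "q' > length u" using q' by simp
    define t where "t = q' - Suc (length u)"
    have t: "q' = Suc (length u) + t" using gt unfolding t_def by simp
    then have "(x # u @ y # rest) ! q = rest ! t" using q' by (simp add: nth_append)
    moreover have "t < length rest" using q q' t by simp
    then have "rest ! t \<in> set rest" by simp
    ultimately show False using rest f by (auto simp: words_over_def)
  qed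
qed

(* the word that collection writes behind g_1 when g_1 moves left past the letter x;
   it represents g_1^-1 x g_1 *)
definition conj_g1 :: "pcp \<Rightarrow> pcp_aux \<Rightarrow> letter \<Rightarrow> word" where
  "conj_g1 P C x = (if snd x then gvec P 1 (ca P 1 (fst x)) else gvec P 1 (cc C 1 (fst x)))"

lemma conj_g1_words_over: "conj_g1 P C x \<in> words_over P 2"
  unfolding conj_g1_def using gvec_words_over[of P 1] by (simp add: numeral_2_eq_2)

lemma concat_conj_g1_words_over: "concat (map (conj_g1 P C) u) \<in> words_over P 2"
  by (induct u) (simp_all add: conj_g1_words_over)

lemma coll_stepI:
  assumes rule: "coll_rule P C i k l r"
    and least: "\<And>i' k' p' l' r'. coll_occ P C (u @ l @ v) i' k' p' l' r' \<Longrightarrow>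
      i < i' \<or> (i = i' \<and> (length u < p' \<or> (length u = p' \<and> k \<le> k')))"
  shows "coll_step P C (u @ l @ v) (u @ r @ v)"
proof -
  have "coll_occ P C (u @ l @ v) i k (length u) l r" using rule by (simp add: coll_occ_def)
  moreover have "u @ r @ v = take (length u) (u @ l @ v) @ r @ drop (length u + length l) (u @ l @ v)"
    by simp
  ultimately show ?thesis using least unfolding coll_step_def by blast
qed

lemma coll_step_first:
  assumes n1: "rel_order P 1 = None" and j: "2 \<le> j" "j \<le> ngen P"
  shows "coll_step P C [(j, True), (1, False), (1, True)] ((1, False) # gvec P 1 (cb P 1 j) @ [(1, True)])"
proof -
  let ?W = "[(j, True), (1::nat, False), (1, True)]"
  have "1 < i' \<or> (1 = i' \<and> (0 < p' \<or> (0 = p' \<and> 1 \<le> k')))"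
    if o: "coll_occ P C ?W i' k' p' l' r'" for i' k' p' l' r'
  proof (cases "i' = 1")
    case True
    \<comment> \<open>a free cancellation would need two letters of index 1, the first of which is not at 0\<close>
    then have "k' = 1 \<or> fst (?W ! p') = 1" using coll_occ_index_1[OF o[unfolded True] n1] by auto
    then show ?thesis using True j by (cases p') auto
  qed (use coll_occ_index_pos[OF o] in simp)
  then show ?thesis
    using coll_stepI[of P C 1 1 "[(j, True), (1, False)]" "(1, False) # gvec P 1 (cb P 1 j)" "[]" "[(1, True)]"]
      coll_rule.conj_b[of 1 j P C] j n1 by simp
qed

lemma coll_step_move_g1:
  assumes n1: "rel_order P 1 = None" and u: "u \<in> words_over P 2" and rest: "rest \<in> words_over P 2"
    and k: "2 \<le> k" "k \<le> ngen P" and inf: "\<not> b \<Longrightarrow> rel_order P k = None"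
  shows "coll_step P C ((1, False) # u @ (k, b) # (1, True) # rest)
                       ((1, False) # u @ (1, True) # conj_g1 P C (k, b) @ rest)"
proof -
  let ?u = "(1::nat, False) # u" and ?W = "(1::nat, False) # (u @ [(k, b)]) @ (1, True) # rest"
  have rule: "coll_rule P C 1 1 [(k, b), (1, True)] ((1, True) # conj_g1 P C (k, b))"
    using k inf coll_rule.conj_a[of 1 k P C] coll_rule.conj_c[of 1 k P C]
    by (cases b) (simp_all add: conj_g1_def)
  have pos: "q = 0 \<or> q = Suc (length (u @ [(k, b)]))" if "q < length ?W" "fst (?W ! q) = 1" for q
    using index_1_positions[of "u @ [(k, b)]" P rest "(1, False)" "(1, True)" q] that u rest k by simp
  have "1 < i' \<or> (1 = i' \<and> (length ?u < p' \<or> (length ?u = p' \<and> 1 \<le> k')))"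
    if o: "coll_occ P C ?W i' k' p' l' r'" for i' k' p' l' r'
  proof (cases "i' = 1")
    case True
    \<comment> \<open>the only letters of index 1 are the first and the last g_1, so every occurrence
       of a rule of index 1 is the conjugation just before that g_1\<close>
    then have "Suc p' < length ?W" "fst (?W ! Suc p') = 1" "k' = 1 \<or> fst (?W ! p') = 1"
      using coll_occ_index_1[OF o[unfolded True] n1] by auto
    then show ?thesis using True pos[of "Suc p'"] pos[of p'] by auto
  qed (use coll_occ_index_pos[OF o] in simp)
  then show ?thesis using coll_stepI[OF rule, of ?u rest] by simp
qed

lemma coll_step_cancel_g1:
  assumes "1 \<le> ngen P"
  shows "coll_step P C ((1, False) # (1, True) # rest) rest"
  using coll_stepI[OF coll_rule.free[of 1 P C False], of "[]" rest] coll_occ_index_pos assms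
  by fastforce

lemma coll_result_conj_g1:
  assumes n1: "rel_order P 1 = None" and n: "1 \<le> ngen P"
    and u: "u \<in> words_over P 2" and inf: "\<forall>k. (k, False) \<in> set u \<longrightarrow> rel_order P k = None"
    and rest: "rest \<in> words_over P 2"
    and res: "coll_result P C ((1, False) # u @ (1, True) # rest) v"
  shows "coll_result P C (concat (map (conj_g1 P C) u) @ rest) v"
  using u inf rest res
proof (induct u arbitrary: rest rule: rev_induct)
  case Nil
  then show ?case using coll_result_step[OF _ coll_step_cancel_g1[OF n]] by simp
next
  case (snoc x u)
  obtain k b where x: "x = (k, b)" by (cases x)
  have u: "u \<in> words_over P 2" and k: "2 \<le> k" "k \<le> ngen P" using snoc(2) x by simp_all
  have "coll_result P C ((1, False) # u @ (1, True) # (conj_g1 P C x @ rest)) v"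
    using coll_result_step[OF _ coll_step_move_g1[OF n1 u snoc(4) k]] snoc(3,5) x by simp
  then show ?case using snoc(1)[of "conj_g1 P C x @ rest"] u snoc(3,4) conj_g1_words_over by simp
qed

section \<open>The group H^[2] and its polycyclic series\<close>

locale pcp_H2 =
  fixes P :: pcp and C :: pcp_aux and H (structure)
  assumes wf: "pcp_wf P" and aux: "aux_ok P C"
  defines H_def: "H \<equiv> Hgrp P 2"

sublocale pcp_H2 \<subseteq> group H
  unfolding H_def by (rule group_Hgrp)

definition tail_subgroup :: "pcp \<Rightarrow> nat \<Rightarrow> word set set" where
  "tail_subgroup P k = cls P 2 ` words_over P k"

context pcp_H2
begin

lemmas cls_in_H = cls_in_carrier[of _ P 2, folded H_def]
lemmas cls_append_H = cls_append[of _ P 2, folded H_def]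
lemmas cls_Cons_H = cls_Cons[of _ _ P 2, folded H_def]
lemmas cls_inv_word_H = cls_inv_word[of _ P 2, folded H_def]
lemmas cls_inv_letter_H = cls_inv_letter[of 2 _ P, folded H_def]
lemmas cls_replicate_H = cls_replicate[of 2 _ P, folded H_def]
lemmas cls_Nil_H = one_Hgrp[of P 2, folded H_def, symmetric]
lemmas carrier_H = carrier_Hgrp[of P 2, folded H_def]

lemma gen_in_H: "2 \<le> j \<Longrightarrow> j \<le> ngen P \<Longrightarrow> cls P 2 [(j, b)] \<in> carrier H"
  by (simp add: cls_in_H)

lemma gvec_in_H: "1 \<le> i \<Longrightarrow> cls P 2 (gvec P i v) \<in> carrier H"
  by (simp add: cls_in_H gvec_words_over_2)

lemma cls_gen_Cons_gvec:
  "2 \<le> i \<Longrightarrow> i \<le> ngen P \<Longrightarrow> cls P 2 ((i, s) # gvec P i v) = cls P 2 [(i, s)] \<otimes> cls P 2 (gvec P i v)"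
  by (intro cls_Cons_H) (simp add: gvec_words_over_2)

lemma cls_gen_pair:
  "2 \<le> i \<Longrightarrow> i \<le> ngen P \<Longrightarrow> 2 \<le> j \<Longrightarrow> j \<le> ngen P \<Longrightarrow>
     cls P 2 [(j, s), (i, t)] = cls P 2 [(j, s)] \<otimes> cls P 2 [(i, t)]"
  by (intro cls_Cons_H) simp

lemma relation_conj:
  assumes "2 \<le> i" "i < j" "j \<le> ngen P"
  shows "cls P 2 [(j, True)] \<otimes> cls P 2 [(i, True)] = cls P 2 [(i, True)] \<otimes> cls P 2 (gvec P i (ca P i j))"
  using pres_rel_cls_eq[OF pres_rel.conj[of 2 i j P]] assms
  by (simp add: cls_append_H gvec_words_over_2)

lemma relation_conj_inv:
  assumes "2 \<le> i" "i < j" "j \<le> ngen P" "rel_order P i = None"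
  shows "cls P 2 [(j, True)] \<otimes> inv cls P 2 [(i, True)] = inv cls P 2 [(i, True)] \<otimes> cls P 2 (gvec P i (cb P i j))"
  using pres_rel_cls_eq[OF pres_rel.conj_inv[of 2 i j P]] assms
  by (simp add: cls_append_H gvec_words_over_2 flip: cls_inv_letter_H)

lemma relation_power:
  assumes "2 \<le> i" "i \<le> ngen P" "rel_order P i = Some m"
  shows "cls P 2 [(i, True)] [^] m = cls P 2 (gvec P i (ex P i))"
  using pres_rel_cls_eq[OF pres_rel.power[of 2 i P m]] assms by (simp add: cls_replicate_H)

lemma rel_order_pos:
  assumes "2 \<le> i" "i \<le> ngen P" "rel_order P i = Some m"
  shows "0 < m"
proof -
  have "in_range P i (ex P 1 i)" using wf assms unfolding pcp_wf_def by auto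
  then show ?thesis using assms(3) by (auto simp: in_range_def)
qed

lemma cls_gvec_inv:
  assumes "peq P (Suc i) (gvec P i v) (inv_word (gvec P i u))" "1 \<le> i"
  shows "cls P 2 (gvec P i v) = inv cls P 2 (gvec P i u)"
  using cls_eqI[OF peq_antimono[OF assms(1)]] assms(2)
  by (simp add: cls_inv_word_H gvec_words_over_2)

lemma cls_gvec_cc:
  "1 \<le> i \<Longrightarrow> i < j \<Longrightarrow> j \<le> ngen P \<Longrightarrow> rel_order P j = None \<Longrightarrow>
     cls P 2 (gvec P i (cc C i j)) = inv cls P 2 (gvec P i (ca P i j))"
  using aux unfolding aux_ok_def by (intro cls_gvec_inv) auto

lemma cls_gvec_cd:
  "1 \<le> i \<Longrightarrow> i < j \<Longrightarrow> j \<le> ngen P \<Longrightarrow> rel_order P i = None \<Longrightarrow> rel_order P j = None \<Longrightarrow>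
     cls P 2 (gvec P i (cd C i j)) = inv cls P 2 (gvec P i (cb P i j))"
  using aux unfolding aux_ok_def by (intro cls_gvec_inv) auto

lemma cls_gvec_cf:
  "1 \<le> i \<Longrightarrow> i \<le> ngen P \<Longrightarrow> rel_order P i = Some m \<Longrightarrow>
     cls P 2 (gvec P i (cf C i)) = inv cls P 2 (gvec P i (ex P i))"
  using aux unfolding aux_ok_def by (intro cls_gvec_inv) auto

lemma relation_conj_c:
  assumes i: "2 \<le> i" "i < j" "j \<le> ngen P" "rel_order P j = None"
  shows "cls P 2 [(j, False), (i, True)] = cls P 2 ((i, True) # gvec P i (cc C i j))"
proof -
  have "cls P 2 [(j, False), (i, True)] = inv cls P 2 [(j, True)] \<otimes> cls P 2 [(i, True)]"
    using i by (simp add: cls_gen_pair cls_inv_letter_H)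
  also have "\<dots> = cls P 2 [(i, True)] \<otimes> inv cls P 2 (gvec P i (ca P i j))"
    using i by (intro inv_conj_eq relation_conj) (simp_all add: gen_in_H gvec_in_H)
  also have "\<dots> = cls P 2 ((i, True) # gvec P i (cc C i j))"
    using i by (simp add: cls_gen_Cons_gvec cls_gvec_cc)
  finally show ?thesis .
qed

lemma relation_conj_d:
  assumes i: "2 \<le> i" "i < j" "j \<le> ngen P" "rel_order P i = None" "rel_order P j = None"
  shows "cls P 2 [(j, False), (i, False)] = cls P 2 ((i, False) # gvec P i (cd C i j))"
proof -
  have "cls P 2 [(j, False), (i, False)] = inv cls P 2 [(j, True)] \<otimes> inv cls P 2 [(i, True)]"
    using i by (simp add: cls_gen_pair cls_inv_letter_H)
  also have "\<dots> = inv cls P 2 [(i, True)] \<otimes> inv cls P 2 (gvec P i (cb P i j))"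
    using i by (intro inv_conj_eq relation_conj_inv) (simp_all add: gen_in_H gvec_in_H)
  also have "\<dots> = cls P 2 ((i, False) # gvec P i (cd C i j))"
    using i by (simp add: cls_gen_Cons_gvec cls_gvec_cd cls_inv_letter_H)
  finally show ?thesis .
qed

lemma relation_inverse:
  assumes i: "2 \<le> i" "i \<le> ngen P" "rel_order P i = Some m"
  shows "cls P 2 [(i, False)] = cls P 2 (replicate (m - 1) (i, True) @ gvec P i (cf C i))"
proof -
  let ?g = "cls P 2 [(i, True)]"
  have g: "?g \<in> carrier H" using i by (simp add: gen_in_H)
  have "replicate (m - 1) (i, True) \<in> words_over P 2"
    using i by (auto simp: words_over_def)
  then have "cls P 2 (replicate (m - 1) (i, True) @ gvec P i (cf C i))
      = cls P 2 (replicate (m - 1) (i, True)) \<otimes> cls P 2 (gvec P i (cf C i))"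
    using i by (intro cls_append_H[symmetric]) (simp_all add: gvec_words_over_2)
  also have "\<dots> = ?g [^] (m - 1) \<otimes> inv (?g [^] m)"
    using i by (simp add: cls_replicate_H cls_gvec_cf relation_power)
  also have "?g [^] m = ?g \<otimes> ?g [^] (m - 1)"
    using rel_order_pos[OF i] g by (simp flip: nat_pow_Suc2)
  also have "?g [^] (m - 1) \<otimes> inv (?g \<otimes> ?g [^] (m - 1)) = cls P 2 [(i, False)]"
    using i g by (simp add: inv_mult_group m_assoc cls_inv_letter_H)
  finally show ?thesis by simp
qed

lemma subgroup_tail_subgroup: "2 \<le> k \<Longrightarrow> subgroup (tail_subgroup P k) H"
proof (rule subgroupI)
  assume k: "2 \<le> k"
  show "tail_subgroup P k \<subseteq> carrier H"
    using k words_over_antimono[of _ P k 2] by (auto simp: tail_subgroup_def intro!: cls_in_H)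
  show "tail_subgroup P k \<noteq> {}" unfolding tail_subgroup_def using words_over_Nil by blast
  fix a b assume "a \<in> tail_subgroup P k" "b \<in> tail_subgroup P k"
  then obtain u v where uv: "u \<in> words_over P k" "v \<in> words_over P k" "a = cls P 2 u" "b = cls P 2 v"
    by (auto simp: tail_subgroup_def)
  have "u \<in> words_over P 2" "v \<in> words_over P 2" using uv k words_over_antimono[of _ P k 2] by blast+
  then show "inv a \<in> tail_subgroup P k" "a \<otimes> b \<in> tail_subgroup P k"
    using uv by (auto simp: tail_subgroup_def cls_inv_word_H cls_append_H)
qed

lemma tail_subgroup_2: "tail_subgroup P 2 = carrier H"
  by (simp add: tail_subgroup_def carrier_H)

lemma tail_subgroup_top: "tail_subgroup P (Suc (ngen P)) = {\<one>}"
proof -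
  have "w = []" if "w \<in> words_over P (Suc (ngen P))" for w
    using that by (cases w) (auto simp: words_over_def)
  then have "words_over P (Suc (ngen P)) = {[]}" by auto
  then show ?thesis by (simp add: tail_subgroup_def cls_Nil_H)
qed

lemma conj_tail_subgroup_closed:
  assumes k: "2 \<le> k" and b: "b \<in> carrier H"
    and gens: "\<And>j. k < j \<Longrightarrow> j \<le> ngen P \<Longrightarrow>
      b \<otimes> cls P 2 [(j, True)] \<otimes> inv b \<in> tail_subgroup P (Suc k)"
    and y: "y \<in> tail_subgroup P (Suc k)"
  shows "b \<otimes> y \<otimes> inv b \<in> tail_subgroup P (Suc k)"
proof -
  let ?N = "tail_subgroup P (Suc k)"
  have N: "subgroup ?N H" using k by (intro subgroup_tail_subgroup) simp
  have "b \<otimes> cls P 2 w \<otimes> inv b \<in> ?N" if "w \<in> words_over P (Suc k)" for w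
    using that
  proof (induct w)
    case Nil
    then show ?case using b subgroup.one_closed[OF N] by (simp add: cls_Nil_H)
  next
    case (Cons x w)
    obtain j s where x: "x = (j, s)" by (cases x)
    have j: "k < j" "j \<le> ngen P" and w: "w \<in> words_over P (Suc k)"
      using Cons(2) x by auto
    have w2: "w \<in> words_over P 2" using w k words_over_antimono[of w P "Suc k" 2] by simp
    have gx: "b \<otimes> cls P 2 [x] \<otimes> inv b \<in> ?N"
    proof (cases s)
      case True
      then show ?thesis using gens[OF j] x by simp
    next
      case False
      then have "b \<otimes> cls P 2 [x] \<otimes> inv b = inv (b \<otimes> cls P 2 [(j, True)] \<otimes> inv b)"
        using x j k b by (simp add: cls_inv_letter_H gen_in_H inv_mult_group m_assoc)
      then show ?thesis using subgroup.m_inv_closed[OF N gens[OF j]] by simp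
    qed
    have "cls P 2 (x # w) = cls P 2 [x] \<otimes> cls P 2 w"
      using x j k w2 by (intro cls_Cons_H) simp
    then have "b \<otimes> cls P 2 (x # w) \<otimes> inv b = (b \<otimes> cls P 2 [x] \<otimes> inv b) \<otimes> (b \<otimes> cls P 2 w \<otimes> inv b)"
      using x j k b w2 by (simp add: gen_in_H cls_in_H m_assoc)
    then show ?case using subgroup.m_closed[OF N gx Cons(1)[OF w]] by simp
  qed
  then show ?thesis using y by (auto simp: tail_subgroup_def)
qed

lemma gvec_in_tail_subgroup: "cls P 2 (gvec P k v) \<in> tail_subgroup P (Suc k)"
  by (auto simp: tail_subgroup_def gvec_words_over)

lemma tail_subgroup_conj_inv_gen:
  assumes k: "2 \<le> k" "k \<le> ngen P" and y: "y \<in> tail_subgroup P (Suc k)"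
  shows "inv cls P 2 [(k, True)] \<otimes> y \<otimes> cls P 2 [(k, True)] \<in> tail_subgroup P (Suc k)"
proof -
  let ?g = "cls P 2 [(k, True)]"
  have g: "?g \<in> carrier H" using k by (simp add: gen_in_H)
  have "inv ?g \<otimes> cls P 2 [(j, True)] \<otimes> inv (inv ?g) = cls P 2 (gvec P k (ca P k j))"
    if "k < j" "j \<le> ngen P" for j
    using g that k by (simp add: gen_in_H gvec_in_H m_assoc relation_conj)
  then show ?thesis
    using conj_tail_subgroup_closed[OF k(1) inv_closed[OF g] _ y] g gvec_in_tail_subgroup by simp
qed

lemma tail_subgroup_conj_gen:
  assumes k: "2 \<le> k" "k \<le> ngen P" and y: "y \<in> tail_subgroup P (Suc k)"
  shows "cls P 2 [(k, True)] \<otimes> y \<otimes> inv cls P 2 [(k, True)] \<in> tail_subgroup P (Suc k)"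
proof (cases "rel_order P k")
  case None
  let ?g = "cls P 2 [(k, True)]"
  have g: "?g \<in> carrier H" using k by (simp add: gen_in_H)
  have "?g \<otimes> cls P 2 [(j, True)] \<otimes> inv ?g = cls P 2 (gvec P k (cb P k j))"
    if "k < j" "j \<le> ngen P" for j
    using g that k None by (simp add: gen_in_H gvec_in_H m_assoc relation_conj_inv)
  then show ?thesis using conj_tail_subgroup_closed[OF k(1) g _ y] gvec_in_tail_subgroup by simp
next
  case (Some m)
  \<comment> \<open>conjugation by g is conjugation by g^m, an element of the subgroup, followed by
     conjugation by the inverse of g^(m - 1)\<close>
  let ?N = "tail_subgroup P (Suc k)" and ?g = "cls P 2 [(k, True)]"
  have N: "subgroup ?N H" using k by (intro subgroup_tail_subgroup) simp
  have g: "?g \<in> carrier H" using k by (simp add: gen_in_H)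
  have "?g [^] m \<in> ?N" using relation_power[OF k Some] gvec_in_tail_subgroup by simp
  then have "?g [^] m \<otimes> y \<otimes> inv (?g [^] m) \<in> ?N"
    using y by (simp add: subgroup.m_closed[OF N] subgroup.m_inv_closed[OF N])
  then have "inv ?g [^] (m - 1) \<otimes> (?g [^] m \<otimes> y \<otimes> inv (?g [^] m)) \<otimes> inv (inv ?g [^] (m - 1)) \<in> ?N"
    using conj_nat_pow_closed[OF N inv_closed[OF g]] tail_subgroup_conj_inv_gen[OF k] g by simp
  moreover have "?g [^] m = ?g [^] (m - 1) \<otimes> ?g"
    using rel_order_pos[OF k Some] by (simp flip: nat_pow_Suc)
  ultimately show ?thesis
    using g subgroup.mem_carrier[OF N y] by (simp add: nat_pow_inv inv_mult_group m_assoc)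
qed

lemma tail_subgroup_conj_pow:
  "2 \<le> k \<Longrightarrow> k \<le> ngen P \<Longrightarrow> y \<in> tail_subgroup P (Suc k) \<Longrightarrow>
     cls P 2 [(k, True)] [^] (z::int) \<otimes> y \<otimes> inv (cls P 2 [(k, True)] [^] z) \<in> tail_subgroup P (Suc k)"
  by (rule conj_int_pow_closed[OF subgroup_tail_subgroup gen_in_H tail_subgroup_conj_gen
      tail_subgroup_conj_inv_gen]) simp_all

lemma cls_letter_int_pow:
  "2 \<le> k \<Longrightarrow> k \<le> ngen P \<Longrightarrow> cls P 2 [(k, s)] = cls P 2 [(k, True)] [^] (if s then 1 else - 1 :: int)"
  by (cases s) (simp_all add: cls_inv_letter_H int_pow_neg gen_in_H)

lemma tail_subgroup_decomp:
  assumes k: "2 \<le> k" "k \<le> ngen P" and x: "x \<in> tail_subgroup P k"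
  shows "\<exists>z::int. \<exists>n\<in>tail_subgroup P (Suc k). x = cls P 2 [(k, True)] [^] z \<otimes> n"
proof -
  let ?N = "tail_subgroup P (Suc k)" and ?g = "cls P 2 [(k, True)]"
  have N: "subgroup ?N H" using k by (intro subgroup_tail_subgroup) simp
  have g: "?g \<in> carrier H" using k by (simp add: gen_in_H)
  have "\<exists>z::int. \<exists>n\<in>?N. cls P 2 w = ?g [^] z \<otimes> n" if "w \<in> words_over P k" for w
    using that
  proof (induct w)
    case Nil
    have "cls P 2 [] = ?g [^] (0::int) \<otimes> \<one>" by (simp add: cls_Nil_H)
    then show ?case using subgroup.one_closed[OF N] by blast
  next
    case (Cons x w)
    obtain j s where x: "x = (j, s)" by (cases x)
    have j: "k \<le> j" "j \<le> ngen P" and w: "w \<in> words_over P k" using Cons(2) x by auto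
    obtain z :: int and n where n: "n \<in> ?N" and zn: "cls P 2 w = ?g [^] z \<otimes> n"
      using Cons(1)[OF w] by blast
    have nc: "n \<in> carrier H" using subgroup.mem_carrier[OF N n] .
    have xc: "cls P 2 [x] \<in> carrier H" using x j k by (simp add: gen_in_H)
    have "cls P 2 (x # w) = cls P 2 [x] \<otimes> (?g [^] z \<otimes> n)"
      unfolding zn[symmetric] using x j k words_over_antimono[OF w, of 2] by (intro cls_Cons_H) simp
    show ?case
    proof (cases "j = k")
      case True
      have "cls P 2 [x] = ?g [^] (if s then 1 else - 1 :: int)"
        unfolding x True by (rule cls_letter_int_pow[OF k])
      then have "cls P 2 (x # w) = ?g [^] ((if s then 1 else - 1) + z) \<otimes> n"
        using \<open>cls P 2 (x # w) = _\<close> g nc by (simp add: int_pow_mult m_assoc)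
      then show ?thesis using n by blast
    next
      case False
      then have "cls P 2 [x] \<in> ?N" using x j by (auto simp: tail_subgroup_def)
      then have n': "?g [^] (- z) \<otimes> cls P 2 [x] \<otimes> inv (?g [^] (- z)) \<in> ?N"
        using k by (intro tail_subgroup_conj_pow)
      have "cls P 2 (x # w) = ?g [^] z \<otimes> ((?g [^] (- z) \<otimes> cls P 2 [x] \<otimes> inv (?g [^] (- z))) \<otimes> n)"
        using \<open>cls P 2 (x # w) = _\<close> g nc xc by (simp add: int_pow_neg m_assoc)
      then show ?thesis using subgroup.m_closed[OF N n' n] by blast
    qed
  qed
  then show ?thesis using x by (auto simp: tail_subgroup_def)
qed

lemma acc_subgroups_tail_subgroup:
  assumes "2 \<le> k" "k \<le> Suc (ngen P)"
  shows "acc_subgroups H (tail_subgroup P k)"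
  using assms(2,1)
proof (induct k rule: inc_induct)
  case base
  then show ?case using acc_subgroups_one[OF is_group] by (simp add: tail_subgroup_top)
next
  case (step k)
  then have k: "2 \<le> k" "k \<le> ngen P" by simp_all
  show ?case
  proof (rule acc_subgroups_cyclic_extension[OF subgroup_tail_subgroup gen_in_H])
    show "acc_subgroups H (tail_subgroup P (Suc k))" using step k by simp
  qed (use k tail_subgroup_decomp tail_subgroup_conj_pow in auto)
qed

subsection \<open>Soundness of collection\<close>

lemma coll_rule_sound:
  assumes r: "coll_rule P C i k l r" and i: "2 \<le> i"
  shows "cls P 2 l = cls P 2 r"
  using r
proof (cases rule: coll_rule.cases)
  case (power m)
  show ?thesis unfolding power(2,3) by (rule pres_rel_cls_eq[OF pres_rel.power]) (use power i in auto)
next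
  case (conj_a j)
  show ?thesis unfolding conj_a(2,3) by (rule pres_rel_cls_eq[OF pres_rel.conj]) (use conj_a i in auto)
next
  case (conj_b j)
  show ?thesis unfolding conj_b(2,3) by (rule pres_rel_cls_eq[OF pres_rel.conj_inv]) (use conj_b i in auto)
next
  case (free b)
  then show ?thesis using i peq.free[of 2 i P "[]" "[]" b] by (simp add: cls_eqI)
qed (use i relation_conj_c relation_conj_d relation_inverse in simp_all)

lemma coll_step_sound:
  assumes "coll_step P C w w'" and w: "w \<in> words_over P 2"
  shows "w' \<in> words_over P 2 \<and> cls P 2 w = cls P 2 w'"
proof -
  obtain i k p l r where occ: "coll_occ P C w i k p l r"
    and w': "w' = take p w @ r @ drop (p + length l) w"
    using assms(1) unfolding coll_step_def by blast
  have rule: "coll_rule P C i k l r" using occ by (simp add: coll_occ_def)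
  have split: "w = take p w @ l @ drop (p + length l) w" by (rule coll_occ_split[OF occ])
  then have parts: "take p w \<in> words_over P 2" "l \<in> words_over P 2" "drop (p + length l) w \<in> words_over P 2"
    using w by (metis words_over_append)+
  obtain b where "(i, b) \<in> set l" using coll_rule_shape[OF rule] by blast
  then have i: "2 \<le> i" using parts(2) by (auto simp: words_over_def)
  then have r: "r \<in> words_over P 2"
    using coll_rule_shape[OF rule] words_over_antimono[of r P i 2] by simp
  have "cls P 2 w = cls P 2 (take p w) \<otimes> (cls P 2 l \<otimes> cls P 2 (drop (p + length l) w))"
    using parts by (subst split) (simp add: cls_append_H)
  also have "\<dots> = cls P 2 w'"
    using parts r coll_rule_sound[OF rule i] by (simp add: w' cls_append_H)
  finally show ?thesis using parts r w' by simp
qed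

lemma coll_result_cls_eq:
  assumes "coll_result P C w v" and "w \<in> words_over P 2"
  shows "cls P 2 w = cls P 2 v"
proof -
  have "(coll_step P C)\<^sup>*\<^sup>* w v" using assms(1) by (simp add: coll_result_def)
  then have "v \<in> words_over P 2 \<and> cls P 2 w = cls P 2 v"
    by (induct rule: rtranclp_induct) (use assms(2) coll_step_sound in fastforce)+
  then show ?thesis by simp
qed

subsection \<open>The endomorphism sigma\<close>

lemma gvec_cb_neg_letter:
  assumes "(k, False) \<in> set (gvec P i (cb P i j))" "1 \<le> i" "i < j" "j \<le> ngen P"
  shows "rel_order P k = None"
proof -
  have k: "cb P i j k < 0" "i < k" "k \<le> ngen P"
    using assms(1) by (auto simp: gvec_def gpow_def split: if_splits)
  then have "in_range P k (cb P i j k)" using wf assms(2-4) unfolding pcp_wf_def by auto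
  then show ?thesis using k(1) by (auto simp: in_range_def split: option.splits)
qed

lemma hom_cls_conj_g1:
  assumes \<sigma>: "\<sigma> \<in> hom H H"
    and gen: "\<forall>j \<in> {2..ngen P}. \<sigma> (cls P 2 [(j, True)]) = cls P 2 (gvec P 1 (ca P 1 j))"
    and u: "u \<in> words_over P 2" and inf: "\<forall>k. (k, False) \<in> set u \<longrightarrow> rel_order P k = None"
  shows "\<sigma> (cls P 2 u) = cls P 2 (concat (map (conj_g1 P C) u))"
  using u inf
proof (induct u)
  case Nil
  then show ?case using hom_one[OF \<sigma> is_group is_group] by (simp add: cls_Nil_H)
next
  case (Cons x u)
  obtain j b where x: "x = (j, b)" by (cases x)
  have u: "u \<in> words_over P 2" and j: "2 \<le> j" "j \<le> ngen P" using Cons(2) x by simp_all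
  have hx: "\<sigma> (cls P 2 [x]) = cls P 2 (conj_g1 P C x)"
  proof (cases b)
    case True
    then show ?thesis using gen j x by (simp add: conj_g1_def)
  next
    case False
    then have "\<sigma> (cls P 2 [x]) = inv cls P 2 (gvec P 1 (ca P 1 j))"
      using x j gen group_hom.hom_inv[of H H \<sigma>] \<sigma>
      by (simp add: group_hom_def group_hom_axioms_def cls_inv_letter_H gen_in_H)
    also have "\<dots> = cls P 2 (gvec P 1 (cc C 1 j))"
      using Cons(3) x False j by (intro cls_gvec_cc[symmetric]) auto
    finally show ?thesis using x False by (simp add: conj_g1_def)
  qed
  have "\<sigma> (cls P 2 (x # u)) = \<sigma> (cls P 2 [x]) \<otimes> \<sigma> (cls P 2 u)"
    unfolding cls_Cons_H[OF Cons(2)] using u x j by (simp add: hom_mult[OF \<sigma>] gen_in_H cls_in_H)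
  also have "\<dots> = cls P 2 (conj_g1 P C x @ concat (map (conj_g1 P C) u))"
    using Cons u by (simp add: hx cls_append_H conj_g1_words_over concat_conj_g1_words_over)
  finally show ?case by simp
qed

lemma hom_cls_gvec_cb:
  assumes n1: "rel_order P 1 = None" and \<sigma>: "\<sigma> \<in> hom H H"
    and gen: "\<forall>j \<in> {2..ngen P}. \<sigma> (cls P 2 [(j, True)]) = cls P 2 (gvec P 1 (ca P 1 j))"
    and coll_hyp: "\<forall>j \<in> {2..ngen P}. \<exists>v. coll_result P C [(j, True), (1, False), (1, True)] v
                              \<and> coll_result P C [(j, True)] v"
    and "j \<in> {2..ngen P}"
  shows "\<sigma> (cls P 2 (gvec P 1 (cb P 1 j))) = cls P 2 [(j, True)]"
proof -
  have j: "2 \<le> j" "j \<le> ngen P" using \<open>j \<in> {2..ngen P}\<close> by simp_all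
  obtain v where coll: "coll_result P C [(j, True), (1, False), (1, True)] v" "coll_result P C [(j, True)] v"
    using bspec[OF coll_hyp \<open>j \<in> {2..ngen P}\<close>] by blast
  let ?u = "gvec P 1 (cb P 1 j)"
  have u: "?u \<in> words_over P 2" by (simp add: gvec_words_over_2)
  have inf: "\<forall>k. (k, False) \<in> set ?u \<longrightarrow> rel_order P k = None"
    using gvec_cb_neg_letter j by auto
  have "coll_result P C ((1, False) # ?u @ (1, True) # []) v"
    using coll_result_step[OF coll(1) coll_step_first[OF n1 j]] by simp
  then have "coll_result P C (concat (map (conj_g1 P C) ?u) @ []) v"
    using j by (intro coll_result_conj_g1[OF n1 _ u inf]) simp_all
  then have "cls P 2 (concat (map (conj_g1 P C) ?u)) = cls P 2 v"
    by (simp add: coll_result_cls_eq concat_conj_g1_words_over)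
  also have "\<dots> = cls P 2 [(j, True)]"
    using coll(2) j by (simp add: coll_result_cls_eq[symmetric])
  finally show ?thesis using hom_cls_conj_g1[OF \<sigma> gen u inf] by simp
qed

lemma hom_surj_if_gens_in_image:
  assumes \<sigma>: "\<sigma> \<in> hom H H"
    and gens: "\<And>j. 2 \<le> j \<Longrightarrow> j \<le> ngen P \<Longrightarrow> cls P 2 [(j, True)] \<in> \<sigma> ` carrier H"
  shows "\<sigma> ` carrier H = carrier H"
proof -
  let ?S = "\<sigma> ` carrier H"
  have S: "subgroup ?S H"
    using \<sigma> by (intro group_hom.img_is_subgroup) (simp add: group_hom_def group_hom_axioms_def)
  have "cls P 2 w \<in> ?S" if "w \<in> words_over P 2" for w
    using that
  proof (induct w)
    case Nil
    then show ?case using subgroup.one_closed[OF S] by (simp add: cls_Nil_H)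
  next
    case (Cons x w)
    obtain j b where x: "x = (j, b)" by (cases x)
    have j: "2 \<le> j" "j \<le> ngen P" using Cons(2) x by simp_all
    have "cls P 2 [x] \<in> ?S"
      using x j gens[OF j] subgroup.m_inv_closed[OF S] by (cases b) (simp_all add: cls_inv_letter_H)
    then show ?case
      using Cons subgroup.m_closed[OF S] by (simp add: cls_Cons_H[OF Cons(2)])
  qed
  then show ?thesis using subgroup.subset[OF S] by (auto simp: carrier_H)
qed

end

theorem lemma12:
  fixes P :: pcp and C :: pcp_aux and \<sigma> :: "word set \<Rightarrow> word set"
  assumes "1 \<le> ngen P"
    and "pcp_wf P"
    and "aux_ok P C"
    and "rel_order P 1 = None"
    and "consistent P 2"
    and "\<sigma> \<in> hom (Hgrp P 2) (Hgrp P 2)"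
    and "\<forall>j \<in> {2..ngen P}. \<sigma> (cls P 2 [(j, True)]) = cls P 2 (gvec P 1 (ca P 1 j))"
    and "\<forall>j \<in> {2..ngen P}. \<exists>v. coll_result P C [(j, True), (1, False), (1, True)] v
                              \<and> coll_result P C [(j, True)] v"
  shows "\<sigma> \<in> iso (Hgrp P 2) (Hgrp P 2) \<and>
         (\<exists>\<tau> \<in> hom (Hgrp P 2) (Hgrp P 2).
            (\<forall>j \<in> {2..ngen P}. \<tau> (cls P 2 [(j, True)]) = cls P 2 (gvec P 1 (cb P 1 j))) \<and>
            (\<forall>x \<in> carrier (Hgrp P 2). \<tau> x = inv_into (carrier (Hgrp P 2)) \<sigma> x))"
proof -
  interpret pcp_H2 P C "Hgrp P 2"
    using assms(2,3) by unfold_locales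
  note \<sigma> = assms(6)
  have preimage: "\<sigma> (cls P 2 (gvec P 1 (cb P 1 j))) = cls P 2 [(j, True)]" if "j \<in> {2..ngen P}" for j
    using hom_cls_gvec_cb[OF assms(4,6,7,8) that] .
  have surj: "\<sigma> ` carrier (Hgrp P 2) = carrier (Hgrp P 2)"
  proof (rule hom_surj_if_gens_in_image[OF \<sigma>])
    fix j assume "2 \<le> j" "j \<le> ngen P"
    then have "cls P 2 [(j, True)] = \<sigma> (cls P 2 (gvec P 1 (cb P 1 j)))" using preimage by simp
    then show "cls P 2 [(j, True)] \<in> \<sigma> ` carrier (Hgrp P 2)" using gvec_in_H by simp
  qed
  have inj: "inj_on \<sigma> (carrier (Hgrp P 2))"
    using surj_endomorphism_inj_if_acc_subgroups[OF \<sigma> surj] acc_subgroups_tail_subgroup[of 2] assms(1)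
    by (simp add: tail_subgroup_2)
  then have iso: "\<sigma> \<in> iso (Hgrp P 2) (Hgrp P 2)" using \<sigma> surj by (simp add: iso_iff)
  have "inv_into (carrier (Hgrp P 2)) \<sigma> \<in> hom (Hgrp P 2) (Hgrp P 2)"
    using iso_set_sym[OF iso] by (rule iso_imp_homomorphism)
  moreover have "inv_into (carrier (Hgrp P 2)) \<sigma> (cls P 2 [(j, True)]) = cls P 2 (gvec P 1 (cb P 1 j))"
    if "j \<in> {2..ngen P}" for j
    using preimage[OF that] inj by (intro inv_into_f_eq) (simp_all add: gvec_in_H)
  ultimately show ?thesis using iso by (intro conjI bexI[of _ "inv_into (carrier (Hgrp P 2)) \<sigma>"]) auto
qed

end
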